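(* Let $\sigma_{01},\sigma_{12}>0$, $\sigma_{02}=\sigma_{01}+\sigma_{12}$, let $\Gamma_{ij}\ge0$ ($i,j=1,2$) with $\Gamma_{12}=\Gamma_{21}$, and let $M=(M_1,M_2)$ with $M_1,M_2>0$. Then every minimizing configuration $(m^k)_{k\ge1}$ for $\overline{e_0}(M)$ has only finitely many nontrivial components, i.e. there is $N<\infty$ such that $m^k=(0,0)$ for all but at most $N$ indices $k$, and hence $\overline{e_0}(M)=\sum_{k=1}^N e_0(m^k)$ after relabeling.
   Context: For $m=(m_1,m_2)$ with $m_1,m_2\ge0$ set $$e_0(m)=2\sigma_{01}\sqrt{\pi(m_1+m_2)}+2\sigma_{12}\sqrt{\pi m_2}+\sum_{i,j=1}^2\frac{\Gamma_{ij}m_im_j}{4\pi},$$ so $e_0(0,0)=0$. $\overline{e_0}(M)=\inf\{\sum_{k\ge1}e_0(m^k): m^k=(m_1^k,m_2^k),\ m_i^k\ge0,\ \sum_k m_i^k=M_i,\ i=1,2\}$. A minimizing configuration is an admissible sequence $(m^k)$ attaining this infimum; nontrivial components are those with $m^k\neq(0,0)$. *)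

theory Defs
  imports "HOL-Analysis.Analysis"
begin

definition comp :: "real \<times> real \<Rightarrow> nat \<Rightarrow> real" where
  "comp m i = (if i = 1 then fst m else snd m)"

definition e0 :: "real \<Rightarrow> real \<Rightarrow> (nat \<Rightarrow> nat \<Rightarrow> real) \<Rightarrow> real \<times> real \<Rightarrow> real" where
  "e0 s01 s12 Gam m =
     2 * s01 * sqrt (pi * (fst m + snd m)) + 2 * s12 * sqrt (pi * snd m)
     + (\<Sum>i\<in>{1..2::nat}. \<Sum>j\<in>{1..2::nat}. Gam i j * comp m i * comp m j / (4 * pi))"

definition admissible :: "real \<times> real \<Rightarrow> (nat \<Rightarrow> real \<times> real) \<Rightarrow> bool" where
  "admissible M ms \<longleftrightarrow>
     (\<forall>k. fst (ms k) \<ge> 0 \<and> snd (ms k) \<ge> 0) \<and>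
     (\<lambda>k. fst (ms k)) sums fst M \<and> (\<lambda>k. snd (ms k)) sums snd M"

text \<open>Total energy of a configuration, as an extended nonnegative real (the series may diverge).\<close>
definition total_energy :: "real \<Rightarrow> real \<Rightarrow> (nat \<Rightarrow> nat \<Rightarrow> real) \<Rightarrow> (nat \<Rightarrow> real \<times> real) \<Rightarrow> ennreal" where
  "total_energy s01 s12 Gam ms = (\<Sum>k. ennreal (e0 s01 s12 Gam (ms k)))"

definition e0bar :: "real \<Rightarrow> real \<Rightarrow> (nat \<Rightarrow> nat \<Rightarrow> real) \<Rightarrow> real \<times> real \<Rightarrow> ennreal" where
  "e0bar s01 s12 Gam M = (INF ms \<in> {ms. admissible M ms}. total_energy s01 s12 Gam ms)"

definition minimizing :: "real \<Rightarrow> real \<Rightarrow> (nat \<Rightarrow> nat \<Rightarrow> real) \<Rightarrow> real \<times> real \<Rightarrow> (nat \<Rightarrow> real \<times> real) \<Rightarrow> bool" where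
  "minimizing s01 s12 Gam M ms \<longleftrightarrow>
     admissible M ms \<and> total_energy s01 s12 Gam ms = e0bar s01 s12 Gam M"

end

theory Submission
  imports Defs
begin

text \<open>Merging two components \<open>a\<close>, \<open>b\<close> of masses \<open>|a| \<le> |b|\<close> saves at least
  \<open>\<sigma>\<^sub>0\<^sub>1 \<surd>(\<pi>|a|)\<close> in the surface term, because \<open>\<surd>(x + y) \<le> \<surd>y + \<surd>x / 2\<close> for \<open>x \<le> y\<close>,
  whereas the interaction term grows by only \<open>O(|a| |b|)\<close>. In an admissible configuration the
  masses tend to zero, so two distinct nontrivial components of small mass could be merged into a
  strictly cheaper admissible configuration.\<close>

lemma sqrt_add_le_sqrt_add_half_sqrt:
  fixes x y :: real
  assumes "0 \<le> x" "x \<le> y"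
  shows "sqrt (x + y) \<le> sqrt y + sqrt x / 2"
proof (rule real_le_lsqrt)
  show "0 \<le> sqrt y + sqrt x / 2"
    using assms by simp
  have "sqrt x * sqrt x \<le> sqrt x * sqrt y"
    using assms by (intro mult_left_mono) auto
  then have "x \<le> sqrt x * sqrt y"
    using assms by simp
  then show "x + y \<le> (sqrt y + sqrt x / 2)\<^sup>2"
    using assms by (simp add: power2_sum power_divide algebra_simps)
qed

lemma sums_fun_upd:
  fixes f :: "nat \<Rightarrow> 'a::real_normed_vector"
  assumes "f sums s"
  shows "f(i := x) sums (s - f i + x)"
proof -
  have "f(i := x) = (\<lambda>k. f k + (if k = i then x - f i else 0))"
    by auto
  moreover have "(\<lambda>k. f k + (if k = i then x - f i else 0)) sums (s + (x - f i))"
    using assms sums_single[of i "\<lambda>_. x - f i"] by (intro sums_add) auto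
  ultimately show ?thesis
    by (simp add: algebra_simps)
qed

lemma sums_prod_iff:
  fixes f :: "nat \<Rightarrow> 'a::real_normed_vector \<times> 'b::real_normed_vector"
  shows "f sums (a, b) \<longleftrightarrow> (\<lambda>k. fst (f k)) sums a \<and> (\<lambda>k. snd (f k)) sums b"
proof
  assume "f sums (a, b)"
  then have "(\<lambda>n. sum f {..<n}) \<longlonglongrightarrow> (a, b)"
    by (simp add: sums_def)
  from tendsto_fst[OF this] tendsto_snd[OF this] show "(\<lambda>k. fst (f k)) sums a \<and> (\<lambda>k. snd (f k)) sums b"
    by (simp add: sums_def fst_sum snd_sum)
next
  assume "(\<lambda>k. fst (f k)) sums a \<and> (\<lambda>k. snd (f k)) sums b"
  then have "(\<lambda>n. (\<Sum>k<n. fst (f k), \<Sum>k<n. snd (f k))) \<longlonglongrightarrow> (a, b)"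
    unfolding sums_def by (intro tendsto_Pair) auto
  moreover have "(\<lambda>n. (\<Sum>k<n. fst (f k), \<Sum>k<n. snd (f k))) = (\<lambda>n. sum f {..<n})"
    by (rule ext) (simp add: prod_eq_iff fst_sum snd_sum)
  ultimately show "f sums (a, b)"
    by (simp add: sums_def)
qed

definition mass :: "real \<times> real \<Rightarrow> real" where
  "mass m = fst m + snd m"

lemma mass_add: "mass (a + b) = mass a + mass b"
  by (simp add: mass_def)

lemma mass_nonneg: "0 \<le> m \<Longrightarrow> 0 \<le> mass m"
  by (simp add: mass_def less_eq_prod_def)

lemma mass_pos_iff: "0 \<le> m \<Longrightarrow> 0 < mass m \<longleftrightarrow> m \<noteq> 0"
  by (auto simp: mass_def less_eq_prod_def prod_eq_iff)

lemma comp_add: "comp (a + b) i = comp a i + comp b i"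
  by (simp add: comp_def)

lemma comp_zero: "comp 0 i = 0"
  by (simp add: comp_def)

lemma comp_nonneg: "0 \<le> m \<Longrightarrow> 0 \<le> comp m i"
  by (simp add: comp_def less_eq_prod_def)

lemma comp_le_mass: "0 \<le> m \<Longrightarrow> comp m i \<le> mass m"
  by (simp add: comp_def mass_def less_eq_prod_def)

definition total_coupling :: "(nat \<Rightarrow> nat \<Rightarrow> real) \<Rightarrow> real" where
  "total_coupling Gam = (\<Sum>i\<in>{1..2}. \<Sum>j\<in>{1..2}. Gam i j)"

definition interaction :: "(nat \<Rightarrow> nat \<Rightarrow> real) \<Rightarrow> real \<times> real \<Rightarrow> real \<times> real \<Rightarrow> real" where
  "interaction Gam a b = (\<Sum>i\<in>{1..2}. \<Sum>j\<in>{1..2}. Gam i j * comp a i * comp b j) / (4 * pi)"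

lemma e0_eq_interaction:
  "e0 s01 s12 Gam m = 2 * s01 * sqrt (pi * mass m) + 2 * s12 * sqrt (pi * snd m) + interaction Gam m m"
  by (simp add: e0_def interaction_def mass_def sum_divide_distrib)

lemma interaction_add_left: "interaction Gam (a + b) c = interaction Gam a c + interaction Gam b c"
  by (simp add: interaction_def comp_add algebra_simps sum.distrib add_divide_distrib)

lemma interaction_add_right: "interaction Gam a (b + c) = interaction Gam a b + interaction Gam a c"
  by (simp add: interaction_def comp_add algebra_simps sum.distrib add_divide_distrib)

lemma interaction_nonneg:
  assumes "\<And>i j. i \<in> {1,2} \<Longrightarrow> j \<in> {1,2} \<Longrightarrow> 0 \<le> Gam i j" "0 \<le> a" "0 \<le> b"
  shows "0 \<le> interaction Gam a b"
proof -
  have "{1..2::nat} = {1,2}"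
    by auto
  then show ?thesis
    unfolding interaction_def using assms
    by (simp add: comp_nonneg)
qed

lemma interaction_le_mass:
  assumes "\<And>i j. i \<in> {1,2} \<Longrightarrow> j \<in> {1,2} \<Longrightarrow> 0 \<le> Gam i j" "0 \<le> a" "0 \<le> b"
  shows "interaction Gam a b \<le> total_coupling Gam / (4 * pi) * mass a * mass b"
proof -
  have "Gam i j * comp a i * comp b j \<le> Gam i j * mass a * mass b" if "i \<in> {1..2}" "j \<in> {1..2}" for i j
  proof -
    from that have "i \<in> {1,2}" "j \<in> {1,2}"
      by auto
    then have "0 \<le> Gam i j"
      by (rule assms(1))
    moreover have "comp a i * comp b j \<le> mass a * mass b"
      using assms(2,3) by (intro mult_mono comp_le_mass) (auto intro: comp_nonneg mass_nonneg)
    ultimately show ?thesis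
      by (simp add: mult.assoc mult_left_mono)
  qed
  then have "(\<Sum>i\<in>{1..2}. \<Sum>j\<in>{1..2}. Gam i j * comp a i * comp b j)
      \<le> (\<Sum>i\<in>{1..2}. \<Sum>j\<in>{1..2}. Gam i j * mass a * mass b)"
    by (intro sum_mono) auto
  also have "\<dots> = (\<Sum>i\<in>{1..2}. \<Sum>j\<in>{1..2}. Gam i j) * mass a * mass b"
    by (simp add: sum_distrib_right)
  finally have "(\<Sum>i\<in>{1..2}. \<Sum>j\<in>{1..2}. Gam i j * comp a i * comp b j)
      \<le> (\<Sum>i\<in>{1..2}. \<Sum>j\<in>{1..2}. Gam i j) * mass a * mass b" .
  then show ?thesis
    unfolding interaction_def total_coupling_def by (simp add: divide_right_mono)
qed

lemma admissible_iff: "admissible M ms \<longleftrightarrow> (\<forall>k. 0 \<le> ms k) \<and> ms sums M"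
  using sums_prod_iff[of ms "fst M" "snd M"] by (simp add: admissible_def less_eq_prod_def)

lemma admissible_nonneg: "admissible M ms \<Longrightarrow> 0 \<le> M"
  unfolding admissible_def less_eq_prod_def
  using sums_le[of "\<lambda>_. 0" "\<lambda>k. fst (ms k)" 0 "fst M"] sums_le[of "\<lambda>_. 0" "\<lambda>k. snd (ms k)" 0 "snd M"]
  by simp

lemma admissible_single: "0 \<le> M \<Longrightarrow> admissible M (\<lambda>k. if k = 0 then M else 0)"
  unfolding admissible_iff using sums_single[of 0 "\<lambda>_. M"] by auto

definition merge_components :: "(nat \<Rightarrow> real \<times> real) \<Rightarrow> nat \<Rightarrow> nat \<Rightarrow> nat \<Rightarrow> real \<times> real" where
  "merge_components ms i j = ms(i := ms i + ms j, j := 0)"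

lemma admissible_merge:
  assumes "admissible M ms" "i \<noteq> j"
  shows "admissible M (merge_components ms i j)"
proof -
  have "ms(i := ms i + ms j) sums (M + ms j)"
    using assms(1) sums_fun_upd[of ms M i "ms i + ms j"] by (simp add: admissible_iff)
  then have "merge_components ms i j sums M"
    unfolding merge_components_def using sums_fun_upd[of "ms(i := ms i + ms j)" "M + ms j" j 0] assms(2)
    by simp
  then show ?thesis
    using assms(1) by (auto simp: admissible_iff merge_components_def add_nonneg_nonneg)
qed

locale e0_params =
  fixes s01 s12 :: real and Gam :: "nat \<Rightarrow> nat \<Rightarrow> real"
  assumes s01_pos: "0 < s01" and s12_nonneg: "0 \<le> s12"
    and Gam_nonneg: "\<And>i j. i \<in> {1,2} \<Longrightarrow> j \<in> {1,2} \<Longrightarrow> 0 \<le> Gam i j"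
begin

abbreviation E :: "real \<times> real \<Rightarrow> real" where
  "E \<equiv> e0 s01 s12 Gam"

lemma e0_nonneg:
  assumes "0 \<le> m"
  shows "0 \<le> E m"
proof -
  have "0 \<le> interaction Gam m m"
    using assms by (intro interaction_nonneg Gam_nonneg)
  then show ?thesis
    unfolding e0_eq_interaction using assms mass_nonneg[OF assms] s01_pos s12_nonneg
    by (simp add: less_eq_prod_def)
qed

lemma e0_zero: "E 0 = 0"
  by (simp add: e0_eq_interaction interaction_def mass_def comp_zero)

lemma e0_add_le:
  assumes "0 \<le> a" "0 \<le> b" "mass a \<le> mass b"
  shows "E (a + b) \<le> E a + E b - s01 * sqrt (pi * mass a) + total_coupling Gam / (2 * pi) * mass a * mass b"
proof -
  have surface: "sqrt (pi * mass (a + b)) \<le> sqrt (pi * mass b) + sqrt (pi * mass a) / 2"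
    using sqrt_add_le_sqrt_add_half_sqrt[of "pi * mass a" "pi * mass b"] assms
    by (simp add: mass_add mass_nonneg distrib_left)
  have interface: "sqrt (pi * snd (a + b)) \<le> sqrt (pi * snd a) + sqrt (pi * snd b)"
    using sqrt_add_le_add_sqrt[of "pi * snd a" "pi * snd b"] assms
    by (simp add: less_eq_prod_def distrib_left)
  have "interaction Gam a b \<le> total_coupling Gam / (4 * pi) * mass a * mass b"
       "interaction Gam b a \<le> total_coupling Gam / (4 * pi) * mass a * mass b"
    using interaction_le_mass[OF Gam_nonneg assms(1,2)] interaction_le_mass[OF Gam_nonneg assms(2,1)]
    by (simp_all add: mult_ac)
  then have cross: "interaction Gam (a + b) (a + b)
      \<le> interaction Gam a a + interaction Gam b b + total_coupling Gam / (2 * pi) * mass a * mass b"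
    by (simp add: interaction_add_left interaction_add_right)
  show ?thesis
    using mult_left_mono[OF surface, of "2 * s01"] mult_left_mono[OF interface, of "2 * s12"]
      cross s01_pos s12_nonneg
    unfolding e0_eq_interaction by (simp add: algebra_simps)
qed

definition small :: "real \<times> real \<Rightarrow> bool" where
  "small m \<longleftrightarrow> mass m \<le> 1 \<and> total_coupling Gam / (2 * pi) * mass m < s01"

lemma e0_add_less_of_le:
  assumes "0 \<le> a" "0 \<le> b" "a \<noteq> 0" "mass a \<le> mass b" "small b"
  shows "E (a + b) < E a + E b"
proof -
  have pos: "0 < mass a"
    using assms mass_pos_iff by blast
  have "total_coupling Gam / (2 * pi) * mass a * mass b = (total_coupling Gam / (2 * pi) * mass b) * mass a"
    by simp
  also have "\<dots> < s01 * mass a"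
    using assms(5) pos by (intro mult_strict_right_mono) (simp_all add: small_def)
  also have "\<dots> \<le> s01 * sqrt (pi * mass a)"
  proof -
    have "mass a \<le> sqrt (mass a)"
      using pos assms(4,5) by (simp add: small_def real_le_rsqrt power2_eq_square mult_le_one)
    also have "\<dots> \<le> sqrt (pi * mass a)"
      using pos pi_ge_two by (simp add: mult_le_cancel_right1)
    finally show ?thesis
      using s01_pos by simp
  qed
  finally show ?thesis
    using e0_add_le[OF assms(1,2,4)] by linarith
qed

lemma e0_add_less:
  assumes "0 \<le> a" "0 \<le> b" "a \<noteq> 0" "b \<noteq> 0" "small a" "small b"
  shows "E (a + b) < E a + E b"
proof (cases "mass a \<le> mass b")
  case True
  then show ?thesis
    using e0_add_less_of_le assms by blast
next
  case False
  then show ?thesis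
    using e0_add_less_of_le[of b a] assms by (simp add: add.commute)
qed

lemma total_energy_eq:
  assumes "\<And>k. 0 \<le> ms k" "(E \<circ> ms) sums s"
  shows "total_energy s01 s12 Gam ms = ennreal s"
proof -
  have "(\<Sum>k. ennreal ((E \<circ> ms) k)) = ennreal s"
    using assms e0_nonneg by (intro suminf_ennreal_eq) (auto simp: o_def)
  then show ?thesis
    by (simp add: total_energy_def)
qed

lemma e0_merge_sums:
  assumes "(E \<circ> ms) sums s" "i \<noteq> j"
  shows "(E \<circ> merge_components ms i j) sums (s - E (ms i) - E (ms j) + E (ms i + ms j))"
proof -
  have "E \<circ> merge_components ms i j = (E \<circ> ms)(i := E (ms i + ms j), j := 0)"
    by (simp add: merge_components_def fun_upd_comp e0_zero)
  moreover have "(E \<circ> ms)(i := E (ms i + ms j)) sums (s - E (ms i) + E (ms i + ms j))"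
    using sums_fun_upd[OF assms(1)] by simp
  ultimately show ?thesis
    using sums_fun_upd[of "(E \<circ> ms)(i := E (ms i + ms j))" "s - E (ms i) + E (ms i + ms j)" j 0] assms(2)
    by (simp add: algebra_simps)
qed

lemma e0bar_le: "admissible M ms \<Longrightarrow> e0bar s01 s12 Gam M \<le> total_energy s01 s12 Gam ms"
  unfolding e0bar_def by (rule INF_lower) (rule CollectI)

lemma minimizing_summable:
  assumes "minimizing s01 s12 Gam M ms"
  shows "summable (E \<circ> ms)"
proof (rule summable_suminf_not_top)
  have adm: "admissible M ms"
    using assms by (simp add: minimizing_def)
  have single: "E \<circ> (\<lambda>k. if k = 0 then M else 0) = (\<lambda>k. if k = 0 then E M else 0)"
    by (auto simp: e0_zero)
  have "(E \<circ> (\<lambda>k. if k = 0 then M else 0)) sums E M"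
    unfolding single using sums_single[of 0 "\<lambda>_. E M"] by simp
  then have "total_energy s01 s12 Gam (\<lambda>k. if k = 0 then M else 0) = ennreal (E M)"
    using admissible_nonneg[OF adm] by (intro total_energy_eq) auto
  then have "total_energy s01 s12 Gam ms \<le> ennreal (E M)"
    using assms e0bar_le[OF admissible_single[OF admissible_nonneg[OF adm]]]
    by (simp add: minimizing_def)
  then show "(\<Sum>k. ennreal ((E \<circ> ms) k)) \<noteq> top"
    by (auto simp: total_energy_def top_unique)
  show "0 \<le> (E \<circ> ms) k" for k
    using adm e0_nonneg by (simp add: admissible_iff)
qed

lemma minimizing_merge_ge:
  assumes "minimizing s01 s12 Gam M ms" "i \<noteq> j"
  shows "E (ms i) + E (ms j) \<le> E (ms i + ms j)"
proof -
  have adm: "admissible M ms"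
    using assms(1) by (simp add: minimizing_def)
  then have nonneg: "\<And>k. 0 \<le> ms k"
    by (simp add: admissible_iff)
  define s where "s = suminf (E \<circ> ms)"
  define s' where "s' = s - E (ms i) - E (ms j) + E (ms i + ms j)"
  have sums: "(E \<circ> ms) sums s"
    unfolding s_def using minimizing_summable[OF assms(1)] by (rule summable_sums)
  have sums': "(E \<circ> merge_components ms i j) sums s'"
    unfolding s'_def using e0_merge_sums[OF sums assms(2)] .
  have adm': "admissible M (merge_components ms i j)"
    using admissible_merge[OF adm assms(2)] .
  then have nonneg': "\<And>k. 0 \<le> merge_components ms i j k"
    by (simp add: admissible_iff)
  have "ennreal s = e0bar s01 s12 Gam M"
    using total_energy_eq[OF nonneg sums] assms(1) by (simp add: minimizing_def)
  also have "\<dots> \<le> ennreal s'"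
    using e0bar_le[OF adm'] total_energy_eq[OF nonneg' sums'] by simp
  finally have "ennreal s \<le> ennreal s'" .
  moreover have "0 \<le> s'"
    by (rule sums_le[OF _ sums_zero sums']) (simp add: nonneg' e0_nonneg)
  ultimately have "s \<le> s'"
    by simp
  then show ?thesis
    by (simp add: s'_def)
qed

lemma eventually_small:
  assumes "admissible M ms"
  shows "eventually (\<lambda>k. small (ms k)) sequentially"
proof -
  have "(\<lambda>k. mass (ms k)) sums mass M"
    using assms unfolding admissible_def mass_def by (intro sums_add) auto
  then have mass_lim: "(\<lambda>k. mass (ms k)) \<longlonglongrightarrow> 0"
    by (intro summable_LIMSEQ_zero sums_summable)
  then have "(\<lambda>k. total_coupling Gam / (2 * pi) * mass (ms k)) \<longlonglongrightarrow> 0"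
    by (rule tendsto_mult_right_zero)
  from order_tendstoD(2)[OF mass_lim zero_less_one] order_tendstoD(2)[OF this s01_pos]
  show ?thesis
    unfolding small_def by eventually_elim simp
qed

lemma minimizing_finite_support:
  assumes "minimizing s01 s12 Gam M ms"
  shows "finite {k. ms k \<noteq> 0}"
proof (rule ccontr)
  assume infinite: "infinite {k. ms k \<noteq> 0}"
  have adm: "admissible M ms"
    using assms by (simp add: minimizing_def)
  obtain N where small: "\<And>k. N \<le> k \<Longrightarrow> small (ms k)"
    using eventually_small[OF adm] by (auto simp: eventually_sequentially)
  obtain i where i: "N \<le> i" "ms i \<noteq> 0"
    using infinite by (auto simp: infinite_nat_iff_unbounded_le)
  obtain j where j: "Suc i \<le> j" "ms j \<noteq> 0"
    using infinite by (auto simp: infinite_nat_iff_unbounded_le)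
  have "E (ms i + ms j) < E (ms i) + E (ms j)"
    using adm i j small by (intro e0_add_less) (auto simp: admissible_iff)
  moreover have "E (ms i) + E (ms j) \<le> E (ms i + ms j)"
    using minimizing_merge_ge[OF assms] i j by simp
  ultimately show False
    by simp
qed

lemma minimizing_e0bar_eq_sum:
  assumes "minimizing s01 s12 Gam M ms"
  shows "e0bar s01 s12 Gam M = ennreal (\<Sum>k | ms k \<noteq> 0. E (ms k))"
proof -
  have "(E \<circ> ms) sums (\<Sum>k | ms k \<noteq> 0. E (ms k))"
    using sums_finite[OF minimizing_finite_support[OF assms], of "E \<circ> ms"] e0_zero by auto
  then show ?thesis
    using assms total_energy_eq by (auto simp: minimizing_def admissible_iff)
qed

end

theorem corollary3p2:
  fixes s01 s12 s02 :: real and Gam :: "nat \<Rightarrow> nat \<Rightarrow> real"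
    and M :: "real \<times> real" and ms :: "nat \<Rightarrow> real \<times> real"
  assumes "s01 > 0" and "s12 > 0" and "s02 = s01 + s12"
    and "\<And>i j. i \<in> {1,2} \<Longrightarrow> j \<in> {1,2} \<Longrightarrow> Gam i j \<ge> 0"
    and "Gam 1 2 = Gam 2 1"
    and "fst M > 0" and "snd M > 0"
    and "minimizing s01 s12 Gam M ms"
  shows "finite {k. ms k \<noteq> (0, 0)} \<and>
         e0bar s01 s12 Gam M = ennreal (\<Sum>k\<in>{k. ms k \<noteq> (0, 0)}. e0 s01 s12 Gam (ms k))"
proof -
  interpret e0_params s01 s12 Gam
    using assms(1,2,4) by unfold_locales auto
  show ?thesis
    using minimizing_finite_support[OF assms(8)] minimizing_e0bar_eq_sum[OF assms(8)]
    by (simp add: zero_prod_def)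
qed

end
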